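(* Let $\varepsilon>0$, and consider a colouring of the edges of the complete bipartite graph $K_{n,n}$ with parts $X,Y$ (each of size $n$) in red and blue such that every vertex of $X$ is incident to at least $\varepsilon n$ red edges and every vertex of $Y$ is incident to at least $\varepsilon n$ blue edges. Then this colouring contains at least $\varepsilon^4n^4/150$ distinct copies of $M_1$.
   Context: $M_1$ is the properly $2$-edge-coloured $K_{2,2}$, i.e. a $4$-cycle whose edges are alternately red and blue. *)

theory Defs
  imports Complex_Main
begin

text \<open>A red/blue colouring of the edges of the complete bipartite graph with
parts X :: 'a set and Y :: 'b set is a predicate red :: 'a => 'b => bool
(edge xy is red iff red x y, blue otherwise).  A copy of M_1 (properly
2-edge-coloured K_{2,2}) is determined by its vertex sets A (two vertices of X)
and B (two vertices of Y): the four edges between them form a 4-cycle whose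
colours alternate.\<close>

definition M1_copies :: "'a set \<Rightarrow> 'b set \<Rightarrow> ('a \<Rightarrow> 'b \<Rightarrow> bool) \<Rightarrow> ('a set \<times> 'b set) set" where
  "M1_copies X Y red = {(A, B). A \<subseteq> X \<and> B \<subseteq> Y \<and>
     (\<exists>x1 x2 y1 y2. A = {x1, x2} \<and> B = {y1, y2} \<and> x1 \<noteq> x2 \<and> y1 \<noteq> y2 \<and>
        red x1 y1 \<and> red x2 y2 \<and> \<not> red x1 y2 \<and> \<not> red x2 y1)}"

end

theory Submission
  imports Defs
begin

text \<open>Count labelled copies \<open>(x\<^sub>1, x\<^sub>2, y\<^sub>1, y\<^sub>2)\<close> of \<open>M\<^sub>1\<close>; every copy has exactly two
labellings.  With \<open>a(x\<^sub>1, x\<^sub>2)\<close> the number of \<open>y\<close> red to \<open>x\<^sub>1\<close> and blue to \<open>x\<^sub>2\<close>, and \<open>d(x)\<close>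
the red degree, there are \<open>Q = \<Sum> a(x\<^sub>1, x\<^sub>2) a(x\<^sub>2, x\<^sub>1)\<close> labelled copies, where
\<open>a(x\<^sub>1, x\<^sub>2) - a(x\<^sub>2, x\<^sub>1) = d(x\<^sub>1) - d(x\<^sub>2)\<close>, and the blue degrees in \<open>Y\<close> give
\<open>\<Sum>\<^sub>x\<^sub>2 a(x\<^sub>1, x\<^sub>2) \<ge> k d(x\<^sub>1) \<ge> k\<^sup>2\<close> for \<open>k = \<epsilon> n\<close>.  For a threshold \<open>t\<close> let
\<open>u(x) = max 0 (t - d(x))\<close> and \<open>U = \<Sum> u(x)\<close>.  The difference identity gives
\<open>a(x\<^sub>1, x\<^sub>2) a(x\<^sub>2, x\<^sub>1) \<ge> u(x\<^sub>1) a(x\<^sub>1, x\<^sub>2) + u(x\<^sub>2) a(x\<^sub>2, x\<^sub>1) - u(x\<^sub>1) u(x\<^sub>2)\<close>, so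
\<open>Q \<ge> 2 k\<^sup>2 U - U\<^sup>2\<close>.  As \<open>U\<close> is continuous in \<open>t\<close>, we may take \<open>U = k\<^sup>2\<close>, whence \<open>Q \<ge> k\<^sup>4\<close> and
there are at least \<open>k\<^sup>4 / 2\<close> copies, much more than the stated \<open>k\<^sup>4 / 150\<close>.\<close>

lemma mult_ge_truncated_bilinear:
  fixes a b c d t :: real
  assumes "a \<ge> 0" "b \<ge> 0" "a + d = b + c"
  shows "a * b \<ge> max 0 (t - c) * a + max 0 (t - d) * b - max 0 (t - c) * max 0 (t - d)"
proof -
  define u v where "u = max 0 (t - c)" and "v = max 0 (t - d)"
  have "a * b - (u * a + v * b - u * v) = (a - v) * (b - u)"
    by (simp add: algebra_simps)
  moreover have "(a - v) * (b - u) \<ge> 0"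
  proof (cases "u = 0 \<or> v = 0")
    case True
    have "v \<le> a" if "u = 0"
      using assms that by (auto simp: u_def v_def max_def split: if_splits)
    moreover have "u \<le> b" if "v = 0"
      using assms that by (auto simp: u_def v_def max_def split: if_splits)
    ultimately show ?thesis
      using True assms(1,2) by auto
  next
    case False
    \<comment> \<open>both thresholds are active, and then the two factors coincide\<close>
    then have "a - v = b - u"
      using assms(3) by (auto simp: u_def v_def max_def split: if_splits)
    then show ?thesis
      by simp
  qed
  ultimately show ?thesis
    unfolding u_def v_def by linarith
qed

lemma exists_sum_truncated_eq:
  fixes d :: "'a \<Rightarrow> real"
  assumes "finite X" "X \<noteq> {}" "\<forall>x\<in>X. d x \<ge> 0" "c \<ge> 0"
  shows "\<exists>t. (\<Sum>x\<in>X. max 0 (t - d x)) = c"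
proof -
  define U where "U t = (\<Sum>x\<in>X. max 0 (t - d x))" for t
  obtain x0 where x0: "x0 \<in> X"
    using assms(2) by blast
  have "U 0 \<le> c"
    unfolding U_def using assms(3,4) by (subst sum.neutral) auto
  moreover have "c \<le> U (c + d x0)"
  proof -
    have "max 0 (c + d x0 - d x0) \<le> U (c + d x0)"
      unfolding U_def by (rule member_le_sum[OF x0]) (auto simp: assms(1))
    then show ?thesis
      by simp
  qed
  moreover have "0 \<le> c + d x0"
    using assms(3,4) x0 by simp
  moreover have "continuous_on {0..c + d x0} U"
    unfolding U_def by (intro continuous_intros)
  ultimately obtain t where "U t = c"
    using IVT' by blast
  then show ?thesis
    unfolding U_def by blast
qed

lemma fourth_power_le_sum_mult_swap:
  fixes a :: "'a \<Rightarrow> 'a \<Rightarrow> real" and d :: "'a \<Rightarrow> real" and k :: real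
  assumes "finite X" "X \<noteq> {}"
    and nonneg: "\<And>x1 x2. a x1 x2 \<ge> 0" "\<forall>x\<in>X. d x \<ge> 0"
    and swap: "\<And>x1 x2. a x1 x2 + d x2 = a x2 x1 + d x1"
    and row_sum: "\<forall>x\<in>X. k\<^sup>2 \<le> (\<Sum>x2\<in>X. a x x2)"
  shows "k ^ 4 \<le> (\<Sum>x1\<in>X. \<Sum>x2\<in>X. a x1 x2 * a x2 x1)"
proof -
  obtain t where U: "(\<Sum>x\<in>X. max 0 (t - d x)) = k\<^sup>2"
    using exists_sum_truncated_eq[OF assms(1,2) nonneg(2), of "k\<^sup>2"] by auto
  define u where "u x = max 0 (t - d x)" for x
  have "(\<Sum>x1\<in>X. \<Sum>x2\<in>X. u x1 * a x1 x2 + u x2 * a x2 x1 - u x1 * u x2)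
      \<le> (\<Sum>x1\<in>X. \<Sum>x2\<in>X. a x1 x2 * a x2 x1)"
    unfolding u_def by (intro sum_mono mult_ge_truncated_bilinear nonneg(1) swap)
  moreover have "(\<Sum>x1\<in>X. \<Sum>x2\<in>X. u x1 * a x1 x2 + u x2 * a x2 x1 - u x1 * u x2)
      = 2 * (\<Sum>x\<in>X. u x * (\<Sum>x2\<in>X. a x x2)) - (\<Sum>x\<in>X. u x)\<^sup>2"
  proof -
    have "(\<Sum>x1\<in>X. \<Sum>x2\<in>X. u x2 * a x2 x1) = (\<Sum>x\<in>X. u x * (\<Sum>x2\<in>X. a x x2))"
      by (subst sum.swap) (simp add: sum_distrib_left)
    moreover have "(\<Sum>x1\<in>X. \<Sum>x2\<in>X. u x1 * u x2) = (\<Sum>x\<in>X. u x)\<^sup>2"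
      by (simp add: power2_eq_square sum_product)
    ultimately show ?thesis
      by (simp add: sum.distrib sum_subtractf sum_distrib_left)
  qed
  moreover have "k\<^sup>2 * (\<Sum>x\<in>X. u x) \<le> (\<Sum>x\<in>X. u x * (\<Sum>x2\<in>X. a x x2))"
  proof -
    have "k\<^sup>2 * u x \<le> u x * (\<Sum>x2\<in>X. a x x2)" if "x \<in> X" for x
      using row_sum that mult_right_mono[of "k\<^sup>2" "\<Sum>x2\<in>X. a x x2" "u x"]
      by (simp add: u_def mult.commute)
    then show ?thesis
      unfolding sum_distrib_left[of "k\<^sup>2"] by (rule sum_mono)
  qed
  moreover have "(\<Sum>x\<in>X. u x) = k\<^sup>2"
    using U by (simp add: u_def)
  ultimately show ?thesis
    by (simp add: power4_eq_xxxx power2_eq_square)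
qed

lemma card_le_mult_card_image:
  assumes "finite A" "\<forall>a\<in>A. card {a'\<in>A. f a' = f a} \<le> m"
  shows "card A \<le> m * card (f ` A)"
proof -
  have "card A = card (\<Union>b\<in>f ` A. {a\<in>A. f a = b})"
    by (rule arg_cong[where f = card]) blast
  also have "\<dots> \<le> (\<Sum>b\<in>f ` A. card {a\<in>A. f a = b})"
    using assms(1) by (intro card_UN_le) simp
  also have "\<dots> \<le> (\<Sum>b\<in>f ` A. m)"
    using assms(2) by (intro sum_mono) auto
  finally show ?thesis
    by (simp add: mult.commute)
qed

definition private_red :: "'b set \<Rightarrow> ('a \<Rightarrow> 'b \<Rightarrow> bool) \<Rightarrow> 'a \<Rightarrow> 'a \<Rightarrow> 'b set" where
  "private_red Y red x1 x2 = {y\<in>Y. red x1 y \<and> \<not> red x2 y}"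

definition M1_labelled :: "'a set \<Rightarrow> 'b set \<Rightarrow> ('a \<Rightarrow> 'b \<Rightarrow> bool) \<Rightarrow> ('a \<times> 'a \<times> 'b \<times> 'b) set" where
  "M1_labelled X Y red = {(x1, x2, y1, y2). x1 \<in> X \<and> x2 \<in> X \<and> y1 \<in> Y \<and> y2 \<in> Y \<and>
     red x1 y1 \<and> red x2 y2 \<and> \<not> red x1 y2 \<and> \<not> red x2 y1}"

lemma M1_labelled_eq_Sigma:
  "M1_labelled X Y red = (SIGMA x1:X. SIGMA x2:X. private_red Y red x1 x2 \<times> private_red Y red x2 x1)"
  by (auto simp: M1_labelled_def private_red_def)

lemma finite_M1_labelled:
  assumes "finite X" "finite Y"
  shows "finite (M1_labelled X Y red)"
  unfolding M1_labelled_eq_Sigma private_red_def using assms by simp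

lemma card_M1_labelled:
  assumes "finite X" "finite Y"
  shows "card (M1_labelled X Y red) =
    (\<Sum>x1\<in>X. \<Sum>x2\<in>X. card (private_red Y red x1 x2) * card (private_red Y red x2 x1))"
  using assms by (simp add: M1_labelled_eq_Sigma private_red_def card_cartesian_product)

lemma M1_copies_eq_image:
  "M1_copies X Y red = (\<lambda>(x1, x2, y1, y2). ({x1, x2}, {y1, y2})) ` M1_labelled X Y red"
proof
  show "M1_copies X Y red \<subseteq> (\<lambda>(x1, x2, y1, y2). ({x1, x2}, {y1, y2})) ` M1_labelled X Y red"
  proof
    fix c assume "c \<in> M1_copies X Y red"
    then obtain x1 x2 y1 y2 where c: "c = ({x1, x2}, {y1, y2})" and "{x1, x2} \<subseteq> X" "{y1, y2} \<subseteq> Y"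
      "red x1 y1" "red x2 y2" "\<not> red x1 y2" "\<not> red x2 y1"
      unfolding M1_copies_def by blast
    then have "(x1, x2, y1, y2) \<in> M1_labelled X Y red"
      by (simp add: M1_labelled_def)
    then show "c \<in> (\<lambda>(x1, x2, y1, y2). ({x1, x2}, {y1, y2})) ` M1_labelled X Y red"
      unfolding c by (rule rev_image_eqI) simp
  qed
  show "(\<lambda>(x1, x2, y1, y2). ({x1, x2}, {y1, y2})) ` M1_labelled X Y red \<subseteq> M1_copies X Y red"
  proof
    fix c assume "c \<in> (\<lambda>(x1, x2, y1, y2). ({x1, x2}, {y1, y2})) ` M1_labelled X Y red"
    then obtain x1 x2 y1 y2 where c: "c = ({x1, x2}, {y1, y2})"
      and lab: "(x1, x2, y1, y2) \<in> M1_labelled X Y red"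
      by auto
    from lab have "{x1, x2} \<subseteq> X" "{y1, y2} \<subseteq> Y" "x1 \<noteq> x2" "y1 \<noteq> y2"
      "red x1 y1" "red x2 y2" "\<not> red x1 y2" "\<not> red x2 y1"
      by (auto simp: M1_labelled_def)
    then show "c \<in> M1_copies X Y red"
      unfolding c M1_copies_def mem_Collect_eq prod.case by blast
  qed
qed

lemma M1_labelled_same_copy:
  assumes "(x1, x2, y1, y2) \<in> M1_labelled X Y red" "(p1, p2, q1, q2) \<in> M1_labelled X Y red"
    and "{p1, p2} = {x1, x2}" "{q1, q2} = {y1, y2}"
  shows "(p1, p2, q1, q2) = (x1, x2, y1, y2) \<or> (p1, p2, q1, q2) = (x2, x1, y2, y1)"
proof -
  have "p1 = x1 \<and> p2 = x2 \<or> p1 = x2 \<and> p2 = x1"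
    using assms(3) by (simp add: doubleton_eq_iff)
  moreover have "q1 = y1 \<and> q2 = y2 \<or> q1 = y2 \<and> q2 = y1"
    using assms(4) by (simp add: doubleton_eq_iff)
  moreover have "red x1 y1" "\<not> red x1 y2" "\<not> red x2 y1" "red p1 q1"
    using assms(1,2) by (simp_all add: M1_labelled_def)
  ultimately show ?thesis
    by blast
qed

lemma card_M1_labelled_le:
  assumes "finite X" "finite Y"
  shows "card (M1_labelled X Y red) \<le> 2 * card (M1_copies X Y red)"
proof -
  let ?f = "\<lambda>(x1, x2, y1, y2). ({x1, x2}, {y1, y2})"
  have "card {q'\<in>M1_labelled X Y red. ?f q' = ?f q} \<le> 2" if q: "q \<in> M1_labelled X Y red" for q
  proof -
    obtain x1 x2 y1 y2 where q_eq: "q = (x1, x2, y1, y2)"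
      using prod_cases4 by blast
    have "{q'\<in>M1_labelled X Y red. ?f q' = ?f q} \<subseteq> {q, (x2, x1, y2, y1)}"
    proof
      fix q' assume q': "q' \<in> {q'\<in>M1_labelled X Y red. ?f q' = ?f q}"
      obtain p1 p2 q1 q2 where q'_eq: "q' = (p1, p2, q1, q2)"
        using prod_cases4 by blast
      have "(p1, p2, q1, q2) \<in> M1_labelled X Y red" "{p1, p2} = {x1, x2}" "{q1, q2} = {y1, y2}"
        using q' unfolding q_eq q'_eq mem_Collect_eq prod.case by simp_all
      from M1_labelled_same_copy[OF q[unfolded q_eq] this]
      show "q' \<in> {q, (x2, x1, y2, y1)}"
        unfolding q_eq q'_eq by simp
    qed
    then have "card {q'\<in>M1_labelled X Y red. ?f q' = ?f q} \<le> card {q, (x2, x1, y2, y1)}"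
      by (rule card_mono[rotated]) simp
    also have "\<dots> \<le> 2"
      by (rule card_insert_le_m1) simp_all
    finally show ?thesis .
  qed
  then have "card (M1_labelled X Y red) \<le> 2 * card (?f ` M1_labelled X Y red)"
    by (intro card_le_mult_card_image finite_M1_labelled assms ballI)
  then show ?thesis
    unfolding M1_copies_eq_image .
qed

lemma card_private_red_swap:
  assumes "finite Y"
  shows "card (private_red Y red x1 x2) + card {y\<in>Y. red x2 y} =
    card (private_red Y red x2 x1) + card {y\<in>Y. red x1 y}"
proof -
  have union: "card (private_red Y red x x') + card {y\<in>Y. red x' y} = card {y\<in>Y. red x y \<or> red x' y}"
    for x x'
  proof -
    have "{y\<in>Y. red x y \<or> red x' y} = private_red Y red x x' \<union> {y\<in>Y. red x' y}"
      by (auto simp: private_red_def)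
    then show ?thesis
      using assms by (simp add: card_Un_disjoint private_red_def disjoint_iff)
  qed
  have comm: "{y\<in>Y. red x2 y \<or> red x1 y} = {y\<in>Y. red x1 y \<or> red x2 y}"
    by blast
  show ?thesis
    using union[of x1 x2] union[of x2 x1] unfolding comm by linarith
qed

lemma sum_card_private_red_ge:
  assumes "finite X" "finite Y" "\<forall>y\<in>Y. k \<le> real (card {x\<in>X. \<not> red x y})"
  shows "k * real (card {y\<in>Y. red x1 y}) \<le> (\<Sum>x2\<in>X. real (card (private_red Y red x1 x2)))"
proof -
  have "(\<Sum>x2\<in>X. card (private_red Y red x1 x2)) = (\<Sum>y\<in>Y. card {x2\<in>X. red x1 y \<and> \<not> red x2 y})"
    unfolding private_red_def using assms(1,2) by (intro sum_multicount_gen) auto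
  also have "\<dots> = (\<Sum>y\<in>Y. if red x1 y then card {x2\<in>X. \<not> red x2 y} else 0)"
    by (intro sum.cong) auto
  also have "\<dots> = (\<Sum>y\<in>{y\<in>Y. red x1 y}. card {x2\<in>X. \<not> red x2 y})"
    using assms(2) by (simp add: sum.inter_filter)
  finally have "(\<Sum>x2\<in>X. real (card (private_red Y red x1 x2)))
      = (\<Sum>y\<in>{y\<in>Y. red x1 y}. real (card {x2\<in>X. \<not> red x2 y}))"
    unfolding of_nat_sum[symmetric] by (rule arg_cong)
  moreover have "(\<Sum>y\<in>{y\<in>Y. red x1 y}. k) \<le> (\<Sum>y\<in>{y\<in>Y. red x1 y}. real (card {x2\<in>X. \<not> red x2 y}))"
    using assms(3) by (intro sum_mono) auto
  ultimately show ?thesis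
    by (simp add: mult.commute)
qed

theorem lemma3p6:
  fixes X :: "'a set" and Y :: "'b set" and red :: "'a \<Rightarrow> 'b \<Rightarrow> bool"
    and n :: nat and \<epsilon> :: real
  assumes "\<epsilon> > 0"
    and "finite X" and "finite Y" and "card X = n" and "card Y = n"
    and "\<forall>x\<in>X. real (card {y\<in>Y. red x y}) \<ge> \<epsilon> * real n"
    and "\<forall>y\<in>Y. real (card {x\<in>X. \<not> red x y}) \<ge> \<epsilon> * real n"
  shows "real (card (M1_copies X Y red)) \<ge> \<epsilon> ^ 4 * real n ^ 4 / 150"
proof (cases "X = {}")
  case True
  then show ?thesis
    using assms(4) by simp
next
  case False
  define k where "k = \<epsilon> * real n"
  define a where "a x1 x2 = real (card (private_red Y red x1 x2))" for x1 x2
  define d where "d x = real (card {y\<in>Y. red x y})" for x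
  have swap: "a x1 x2 + d x2 = a x2 x1 + d x1" for x1 x2
    unfolding a_def d_def of_nat_add[symmetric] of_nat_eq_iff
    by (rule card_private_red_swap[OF assms(3)])
  have row_sum: "\<forall>x\<in>X. k\<^sup>2 \<le> (\<Sum>x2\<in>X. a x x2)"
  proof
    fix x assume "x \<in> X"
    then have "k * k \<le> k * d x"
      using assms(1,6) by (intro mult_left_mono) (simp_all add: k_def d_def)
    also have "\<dots> \<le> (\<Sum>x2\<in>X. a x x2)"
      unfolding a_def d_def using assms(2,3,7) by (intro sum_card_private_red_ge) (simp_all add: k_def)
    finally show "k\<^sup>2 \<le> (\<Sum>x2\<in>X. a x x2)"
      by (simp add: power2_eq_square)
  qed
  have "k ^ 4 \<le> (\<Sum>x1\<in>X. \<Sum>x2\<in>X. a x1 x2 * a x2 x1)"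
    by (rule fourth_power_le_sum_mult_swap[OF assms(2) False _ _ swap row_sum])
      (simp_all add: a_def d_def)
  also have "\<dots> = real (card (M1_labelled X Y red))"
    unfolding a_def by (simp add: card_M1_labelled[OF assms(2,3)])
  also have "\<dots> \<le> real (2 * card (M1_copies X Y red))"
    using card_M1_labelled_le[OF assms(2,3), of red] by (simp only: of_nat_le_iff)
  finally have "\<epsilon> ^ 4 * real n ^ 4 \<le> 2 * real (card (M1_copies X Y red))"
    by (simp add: k_def power_mult_distrib)
  then show ?thesis
    by linarith
qed

end
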